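(* Let $G$ be a topological group and $H$ a closed subgroup of finite index in $G$. Let $(\operatorname{Bohr}(G),\beta)$ be the Bohr compactification of $G$ and set $K=\overline{\beta(H)}$. Then: (i) $K$ is a subgroup of finite index in $\operatorname{Bohr}(G)$; (ii) $(K,\beta|_H)$ is a Bohr compactification of $H$; (iii) $K$ and $\operatorname{Bohr}(G)$ have the same connected component of the identity.
   Context: A Bohr compactification of a topological group $G$ is a pair $(\operatorname{Bohr}(G),\beta)$ with $\operatorname{Bohr}(G)$ compact and $\beta$ a continuous homomorphism with dense image such that every continuous homomorphism from $G$ to a compact group $L$ factors as $\alpha'\circ\beta$ with $\alpha':\operatorname{Bohr}(G)\to L$ continuous. *)

theory Defs
  imports "HOL-Analysis.Analysis" "HOL-Algebra.Group" "HOL-Algebra.Coset"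
begin

definition topological_group :: "('a, 'c) monoid_scheme \<Rightarrow> 'a topology \<Rightarrow> bool" where
  "topological_group G T \<longleftrightarrow>
     group G \<and> topspace T = carrier G \<and>
     continuous_map (prod_topology T T) T (\<lambda>p. fst p \<otimes>\<^bsub>G\<^esub> snd p) \<and>
     continuous_map T T (\<lambda>x. inv\<^bsub>G\<^esub> x)"

definition compact_group :: "('a, 'c) monoid_scheme \<Rightarrow> 'a topology \<Rightarrow> bool" where
  "compact_group G T \<longleftrightarrow> topological_group G T \<and> compact_space T \<and> Hausdorff_space T"

text \<open>(B, S, beta) is a Bohr compactification of the topological group (G, T), where the
  universal property is required for all compact target groups whose elements live in
  the type 'l (HOL cannot quantify over types inside a formula).\<close>
definition bohr_compactification_wrt ::
  "'l itself \<Rightarrow> ('a, 'c) monoid_scheme \<Rightarrow> 'a topology \<Rightarrow>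
   ('b, 'd) monoid_scheme \<Rightarrow> 'b topology \<Rightarrow> ('a \<Rightarrow> 'b) \<Rightarrow> bool" where
  "bohr_compactification_wrt _ G T B S beta \<longleftrightarrow>
     compact_group B S \<and> beta \<in> hom G B \<and> continuous_map T S beta \<and>
     S closure_of (beta ` carrier G) = topspace S \<and>
     (\<forall>(L :: 'l monoid) U alpha.
        compact_group L U \<and> alpha \<in> hom G L \<and> continuous_map T U alpha \<longrightarrow>
        (\<exists>alpha'. alpha' \<in> hom B L \<and> continuous_map S U alpha' \<and>
                  (\<forall>x \<in> carrier G. alpha x = alpha' (beta x))))"

end

theory Submission
  imports Defs
begin

text \<open>A continuous homomorphism \<open>alpha\<close> from \<open>H\<close> into a compact group \<open>L\<close> induces, since \<open>H\<close> has
  finite index, a continuous homomorphism from \<open>G\<close> into the compact wreath product of \<open>L\<close> with the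
  permutations of the cosets of \<open>H\<close>. By the universal property it extends to \<open>Bohr(G)\<close>; the
  stabiliser of the coset \<open>H\<close> is closed and contains \<open>beta ` H\<close>, hence \<open>K\<close>, and there the
  \<open>H\<close>-coordinate of the extension is a homomorphism extending \<open>alpha\<close>. This makes \<open>K\<close> the Bohr
  compactification of \<open>H\<close>. Finitely many closed translates of \<open>K\<close> cover the dense image of \<open>G\<close>,
  so \<open>K\<close> has finite index; being closed, it is then also open, so it contains the identity
  component of \<open>Bohr(G)\<close>.\<close>

section \<open>Topological groups\<close>

lemma topological_group_group: "topological_group G T \<Longrightarrow> group G"
  by (simp add: topological_group_def)

lemma topological_group_topspace: "topological_group G T \<Longrightarrow> topspace T = carrier G"
  by (simp add: topological_group_def)

lemma continuous_map_group_mult: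
  assumes "topological_group G T" "continuous_map X T f" "continuous_map X T g"
  shows "continuous_map X T (\<lambda>x. f x \<otimes>\<^bsub>G\<^esub> g x)"
proof -
  have "continuous_map (prod_topology T T) T (\<lambda>p. fst p \<otimes>\<^bsub>G\<^esub> snd p)"
    using assms(1) by (simp add: topological_group_def)
  from continuous_map_compose[OF continuous_map_pairedI[OF assms(2,3)] this]
  show ?thesis by (simp add: o_def)
qed

lemma continuous_map_group_inv:
  assumes "topological_group G T" "continuous_map X T f"
  shows "continuous_map X T (\<lambda>x. inv\<^bsub>G\<^esub> f x)"
proof -
  have "continuous_map T T (\<lambda>x. inv\<^bsub>G\<^esub> x)"
    using assms(1) by (simp add: topological_group_def)
  from continuous_map_compose[OF assms(2) this] show ?thesis by (simp add: o_def)
qed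

lemma continuous_map_group_translate:
  assumes TG: "topological_group G T" and "a \<in> carrier G" "b \<in> carrier G"
  shows "continuous_map T T (\<lambda>x. a \<otimes>\<^bsub>G\<^esub> x \<otimes>\<^bsub>G\<^esub> b)"
  using assms topological_group_topspace[OF TG]
  by (intro continuous_map_group_mult[OF TG] continuous_map_id[unfolded id_def]) auto

lemma closedin_r_coset:
  fixes G (structure)
  assumes TG: "topological_group G T" and "closedin T A" and a: "a \<in> carrier G"
  shows "closedin T (A #> a)"
proof -
  interpret group G using topological_group_group[OF TG] .
  have A: "A \<subseteq> carrier G" using assms closedin_subset topological_group_topspace by metis
  have "A #> a = {x \<in> topspace T. x \<otimes> inv a \<in> A}"
  proof safe
    fix x assume "x \<in> A #> a"
    then obtain h where "h \<in> A" "x = h \<otimes> a" by (auto simp: r_coset_def)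
    then show "x \<in> topspace T" "x \<otimes> inv a \<in> A"
      using A a by (auto simp: m_assoc topological_group_topspace[OF TG])
  next
    fix x assume x: "x \<in> topspace T" "x \<otimes> inv a \<in> A"
    then have "x = (x \<otimes> inv a) \<otimes> a"
      using a by (simp add: m_assoc topological_group_topspace[OF TG])
    then show "x \<in> A #> a" using x by (auto simp: r_coset_def)
  qed
  moreover have "continuous_map T T (\<lambda>x. x \<otimes> inv a)"
    using a by (intro continuous_map_group_mult[OF TG] continuous_map_id[unfolded id_def])
      (auto simp: topological_group_topspace[OF TG])
  ultimately show ?thesis
    using closedin_continuous_map_preimage[OF _ assms(2)] by simp
qed

text \<open>The complement of a subgroup of finite index is a finite union of closed cosets.\<close>

lemma openin_closed_subgroup_finite_index:
  fixes G (structure)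
  assumes TG: "topological_group G T" and H: "subgroup H G" "closedin T H"
    and fin: "finite (rcosets H)"
  shows "openin T H"
proof -
  interpret group G using topological_group_group[OF TG] .
  have HR: "H \<in> rcosets H" by (rule subgroup.subgroup_in_rcosets[OF H(1) is_group])
  have D: "C \<inter> H = {}" if "C \<in> rcosets H" "C \<noteq> H" for C
    using rcos_disjoint[OF H(1)] that HR unfolding pairwise_def disjnt_def by blast
  have "\<Union>(rcosets H - {H}) = topspace T - H"
  proof
    show "\<Union>(rcosets H - {H}) \<subseteq> topspace T - H"
      using rcosets_part_G[OF H(1)] D topological_group_topspace[OF TG] by blast
    show "topspace T - H \<subseteq> \<Union>(rcosets H - {H})"
      using rcosets_part_G[OF H(1)] topological_group_topspace[OF TG] by blast
  qed
  moreover have "closedin T (\<Union>(rcosets H - {H}))"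
    using fin closedin_r_coset[OF TG H(2)] by (intro closedin_Union) (auto simp: RCOSETS_def)
  ultimately show ?thesis
    using closedin_subset[OF H(2)] by (simp add: openin_closedin_eq)
qed

lemma subgroup_closure_of:
  fixes G (structure)
  assumes TG: "topological_group G T" and H: "subgroup H G"
  shows "subgroup (T closure_of H) G"
proof -
  interpret group G using topological_group_group[OF TG] .
  let ?K = "T closure_of H"
  have m: "continuous_map (prod_topology T T) T (\<lambda>p. fst p \<otimes> snd p)"
    and i: "continuous_map T T (\<lambda>x. inv x)"
    using TG by (auto simp: topological_group_def)
  show ?thesis
  proof
    show "?K \<subseteq> carrier G"
      using closure_of_subset_topspace topological_group_topspace[OF TG] by metis
    show "\<one> \<in> ?K"
      using closure_of_subset[of H T] subgroup.one_closed[OF H] subgroup.subset[OF H]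
        topological_group_topspace[OF TG] by auto
  next
    fix x y assume xy: "x \<in> ?K" "y \<in> ?K"
    have "(\<lambda>p. fst p \<otimes> snd p) ` (?K \<times> ?K)
        \<subseteq> T closure_of ((\<lambda>p. fst p \<otimes> snd p) ` (H \<times> H))"
      unfolding closure_of_Times[symmetric] by (rule continuous_map_image_closure_subset[OF m])
    also have "\<dots> \<subseteq> ?K"
      using subgroup.m_closed[OF H] by (intro closure_of_mono) auto
    finally have "(\<lambda>p. fst p \<otimes> snd p) (x, y) \<in> ?K" using xy by blast
    then show "x \<otimes> y \<in> ?K" by simp
  next
    fix x assume x: "x \<in> ?K"
    have "(\<lambda>x. inv x) ` ?K \<subseteq> T closure_of ((\<lambda>x. inv x) ` H)"
      by (rule continuous_map_image_closure_subset[OF i])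
    also have "\<dots> \<subseteq> ?K"
      using subgroup.m_inv_closed[OF H] by (intro closure_of_mono) auto
    finally show "inv x \<in> ?K" using x by auto
  qed
qed

lemma topological_group_subgroup:
  fixes G (structure)
  assumes TG: "topological_group G T" and H: "subgroup H G"
  shows "topological_group (G\<lparr>carrier := H\<rparr>) (subtopology T H)"
proof -
  interpret group G using topological_group_group[OF TG] .
  have m: "continuous_map (prod_topology T T) T (\<lambda>p. fst p \<otimes> snd p)"
    and i: "continuous_map T T (\<lambda>x. inv x)"
    using TG by (auto simp: topological_group_def)
  have "continuous_map (prod_topology (subtopology T H) (subtopology T H)) (subtopology T H)
      (\<lambda>p. fst p \<otimes> snd p)"
    unfolding continuous_map_in_subtopology
    using continuous_map_from_subtopology[OF m, of "H \<times> H"] subgroup.m_closed[OF H]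
    by (auto simp: subtopology_Times)
  moreover have "continuous_map (subtopology T H) (subtopology T H) (\<lambda>x. inv\<^bsub>G\<lparr>carrier := H\<rparr>\<^esub> x)"
    using continuous_map_from_subtopology[OF i, of H] subgroup.m_inv_closed[OF H]
    by (auto simp: continuous_map_in_subtopology m_inv_consistent[OF H]
        intro: continuous_map_eq)
  ultimately show ?thesis
    using subgroup_imp_group[OF H] subgroup.subset[OF H] topological_group_topspace[OF TG]
    by (auto simp: topological_group_def)
qed

lemma compact_group_closed_subgroup:
  assumes CG: "compact_group G T" and H: "subgroup H G" "closedin T H"
  shows "compact_group (G\<lparr>carrier := H\<rparr>) (subtopology T H)"
proof -
  have "compact_space T" "Hausdorff_space T" "topological_group G T"
    using CG by (simp_all add: compact_group_def)
  then show ?thesis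
    unfolding compact_group_def
    using topological_group_subgroup[OF _ H(1)] compact_space_subtopology[OF closedin_compact_space]
      Hausdorff_space_subtopology H(2) by blast
qed

text \<open>The closed cosets \<open>K #> beta g\<close>, for \<open>g\<close> running through representatives of the cosets of
  \<open>H\<close>, are finitely many and cover the dense set \<open>beta ` carrier G\<close>.\<close>

lemma finite_rcosets_dense_image:
  fixes G (structure)
  assumes "group G" and TGB: "topological_group B S" and bh: "beta \<in> hom G B"
    and dense: "S closure_of (beta ` carrier G) = topspace S"
    and H: "subgroup H G" and fin: "finite (rcosets H)"
    and K: "subgroup K B" "closedin S K" and HK: "beta ` H \<subseteq> K"
  shows "finite (rcosets\<^bsub>B\<^esub> K)"
proof -
  interpret G: group G by fact
  interpret B: group B using topological_group_group[OF TGB] .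
  have "\<forall>C\<in>rcosets H. \<exists>a. a \<in> carrier G \<and> C = H #> a"
    unfolding RCOSETS_def by blast
  from bchoice[OF this] obtain rep where "\<forall>C\<in>rcosets H. rep C \<in> carrier G \<and> C = H #> rep C" ..
  then have rep: "\<And>C. C \<in> rcosets H \<Longrightarrow> rep C \<in> carrier G \<and> C = H #> rep C" by blast
  define cover where "cover = (\<lambda>C. K #>\<^bsub>B\<^esub> beta (rep C)) ` (rcosets H)"
  have "beta ` carrier G \<subseteq> \<Union>cover"
  proof
    fix y assume "y \<in> beta ` carrier G"
    then obtain g where g: "g \<in> carrier G" "y = beta g" by blast
    have C: "H #> g \<in> rcosets H" by (rule G.rcosetsI[OF subgroup.subset[OF H] g(1)])
    define r where "r = rep (H #> g)"
    have r: "r \<in> carrier G" "H #> g = H #> r" using rep[OF C] by (simp_all add: r_def)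
    then have "g \<in> H #> r" using G.rcos_self[OF g(1) H] by simp
    then obtain h where h: "h \<in> H" "g = h \<otimes> r" unfolding r_coset_def by blast
    then have "beta g = beta h \<otimes>\<^bsub>B\<^esub> beta r"
      using r(1) subgroup.subset[OF H] hom_mult[OF bh] by auto
    then have "y \<in> K #>\<^bsub>B\<^esub> beta (rep (H #> g))"
      using h HK g(2) unfolding r_coset_def r_def by blast
    then show "y \<in> \<Union>cover" using C unfolding cover_def by blast
  qed
  moreover have "closedin S (\<Union>cover)"
    unfolding cover_def using fin rep hom_in_carrier[OF bh]
    by (intro closedin_Union) (auto intro: closedin_r_coset[OF TGB K(2)])
  ultimately have "carrier B \<subseteq> \<Union>cover"
    using closure_of_minimal dense topological_group_topspace[OF TGB] by metis
  have "rcosets\<^bsub>B\<^esub> K \<subseteq> cover"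
  proof
    fix X assume "X \<in> rcosets\<^bsub>B\<^esub> K"
    then obtain b where b: "b \<in> carrier B" "X = K #>\<^bsub>B\<^esub> b" unfolding RCOSETS_def by blast
    with \<open>carrier B \<subseteq> \<Union>cover\<close> obtain C where C: "C \<in> rcosets H" "b \<in> K #>\<^bsub>B\<^esub> beta (rep C)"
      unfolding cover_def by blast
    then have "K #>\<^bsub>B\<^esub> beta (rep C) = X"
      using B.repr_independence[OF C(2) _ K(1)] rep hom_in_carrier[OF bh] b(2) by blast
    then show "X \<in> cover" using C(1) unfolding cover_def by blast
  qed
  then show ?thesis using fin finite_subset unfolding cover_def by blast
qed

lemma connected_component_of_clopen_subtopology:
  assumes "openin X K" "closedin X K" "x \<in> K"
  shows "connected_component_of (subtopology X K) x = connected_component_of X x"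
proof -
  have "x \<in> connected_component_of_set X x"
    using assms openin_subset connected_component_of_refl by fastforce
  then have "connected_component_of_set X x \<subseteq> K"
    using connectedin_clopen_cases[OF connectedin_connected_component_of assms(2,1)] assms(3)
    unfolding disjnt_def by blast
  then show ?thesis by (rule connected_component_of_subtopology_eq[THEN iffD2])
qed

section \<open>Transport of structure\<close>

lemma inj_on_closure_of_open_traces:
  assumes "Hausdorff_space X"
  shows "inj_on (\<lambda>x. {{a \<in> A. f a \<in> V} | V. openin X V \<and> x \<in> V}) (X closure_of (f ` A))"
proof (rule inj_onI, rule ccontr)
  fix x y assume x: "x \<in> X closure_of (f ` A)" and y: "y \<in> X closure_of (f ` A)" and "x \<noteq> y"
    and eq: "{{a \<in> A. f a \<in> V} | V. openin X V \<and> x \<in> V} = {{a \<in> A. f a \<in> V} | V. openin X V \<and> y \<in> V}"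
  have "x \<in> topspace X" "y \<in> topspace X"
    using x y closure_of_subset_topspace[of X "f ` A"] by auto
  with assms \<open>x \<noteq> y\<close> obtain U W
    where UW: "openin X U" "openin X W" "x \<in> U" "y \<in> W" "disjnt U W"
    unfolding Hausdorff_space_def by metis
  have "{a \<in> A. f a \<in> U} \<in> {{a \<in> A. f a \<in> V} | V. openin X V \<and> y \<in> V}"
    using eq UW(1,3) by blast
  then obtain V where V: "{a \<in> A. f a \<in> U} = {a \<in> A. f a \<in> V}" "openin X V" "y \<in> V"
    by blast
  have "y \<in> V \<inter> W \<and> openin X (V \<inter> W)" using V(2,3) UW(2,4) by blast
  then obtain a where "a \<in> A" "f a \<in> V \<inter> W"
    using y unfolding in_closure_of by blast
  then show False using V(1) UW(5) unfolding disjnt_def by blast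
qed

definition transport_monoid :: "('x \<Rightarrow> 'y) \<Rightarrow> ('x, 'z) monoid_scheme \<Rightarrow> 'y monoid" where
  "transport_monoid e L = \<lparr>carrier = e ` carrier L,
     mult = (\<lambda>a b. e (inv_into (carrier L) e a \<otimes>\<^bsub>L\<^esub> inv_into (carrier L) e b)),
     one = e \<one>\<^bsub>L\<^esub>\<rparr>"

definition transport_topology ::
  "('x \<Rightarrow> 'y) \<Rightarrow> ('x, 'z) monoid_scheme \<Rightarrow> 'x topology \<Rightarrow> 'y topology" where
  "transport_topology e L U = pullback_topology (e ` carrier L) (inv_into (carrier L) e) U"

lemma group_transport_monoid:
  fixes L :: "('x, 'z) monoid_scheme" and e :: "'x \<Rightarrow> 'y"
  assumes gL: "group L" and inj: "inj_on e (carrier L)"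
  defines "d \<equiv> inv_into (carrier L) e"
  shows "group (transport_monoid e L)"
    and "e \<in> hom L (transport_monoid e L)" and "d \<in> hom (transport_monoid e L) L"
    and "a \<in> e ` carrier L \<Longrightarrow> inv\<^bsub>transport_monoid e L\<^esub> a = e (inv\<^bsub>L\<^esub> (d a))"
proof -
  let ?M = "transport_monoid e L"
  interpret L: group L by (fact gL)
  have de: "d (e x) = x" if "x \<in> carrier L" for x using inv_into_f_f[OF inj that] by (simp add: d_def)
  have carrier_M: "carrier ?M = e ` carrier L"
    and mult_M: "x \<otimes>\<^bsub>?M\<^esub> y = e (d x \<otimes>\<^bsub>L\<^esub> d y)" for x y
    by (simp_all add: transport_monoid_def d_def)
  show eh: "e \<in> hom L ?M"
    by (rule homI) (auto simp: carrier_M mult_M de)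
  have "group (?M\<lparr>carrier := e ` carrier L, one := e \<one>\<^bsub>L\<^esub>\<rparr>)"
    using L.hom_imp_img_group[OF eh] .
  then show gM: "group ?M" by (simp add: transport_monoid_def)
  show "d \<in> hom ?M L"
    by (rule homI) (auto simp: carrier_M mult_M de)
  have GH: "group_hom L ?M e"
    by (intro group_hom.intro group_hom_axioms.intro L.group_axioms gM eh)
  show "inv\<^bsub>?M\<^esub> a = e (inv\<^bsub>L\<^esub> (d a))" if "a \<in> e ` carrier L"
    using that group_hom.hom_inv[OF GH] de by auto
qed

lemma compact_group_transport:
  fixes L :: "('x, 'z) monoid_scheme" and e :: "'x \<Rightarrow> 'y"
  assumes CG: "compact_group L U" and inj: "inj_on e (carrier L)"
  defines "d \<equiv> inv_into (carrier L) e"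
  shows "compact_group (transport_monoid e L) (transport_topology e L U)"
    and "continuous_map U (transport_topology e L U) e"
    and "continuous_map (transport_topology e L U) U d"
proof -
  let ?M = "transport_monoid e L" and ?V = "transport_topology e L U"
  have TG: "topological_group L U" using CG by (simp add: compact_group_def)
  note M = group_transport_monoid[OF topological_group_group[OF TG] inj, folded d_def]
  have tsU: "topspace U = carrier L" using topological_group_topspace[OF TG] .
  have de: "d (e x) = x" if "x \<in> carrier L" for x using inv_into_f_f[OF inj that] by (simp add: d_def)
  have dc: "d a \<in> carrier L" and ed: "e (d a) = a" if "a \<in> e ` carrier L" for a
    using that de by auto
  have tsV: "topspace ?V = e ` carrier L"
    using dc by (auto simp: transport_topology_def topspace_pullback_topology tsU d_def)
  show dcont: "continuous_map ?V U d"
    using continuous_map_pullback[OF continuous_map_id, of "e ` carrier L" d U]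
    by (simp add: transport_topology_def d_def)
  show econt: "continuous_map U ?V e"
    unfolding transport_topology_def d_def[symmetric]
    by (rule continuous_map_pullback') (auto simp: tsU de intro: continuous_map_eq[OF continuous_map_id])
  have "homeomorphic_maps U ?V e d"
    unfolding homeomorphic_maps_def using econt dcont de ed by (simp add: tsU tsV)
  then have "U homeomorphic_space ?V"
    unfolding homeomorphic_space_def by blast
  then have "compact_space ?V" "Hausdorff_space ?V"
    using CG homeomorphic_compact_space homeomorphic_Hausdorff_space
    by (auto simp: compact_group_def)
  moreover have "continuous_map (prod_topology ?V ?V) U (\<lambda>p. d (fst p) \<otimes>\<^bsub>L\<^esub> d (snd p))"
    by (intro continuous_map_group_mult[OF TG] continuous_map_compose[OF continuous_map_fst dcont, unfolded o_def]
        continuous_map_compose[OF continuous_map_snd dcont, unfolded o_def])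
  from continuous_map_compose[OF this econt]
  have "continuous_map (prod_topology ?V ?V) ?V (\<lambda>p. fst p \<otimes>\<^bsub>?M\<^esub> snd p)"
    by (simp add: o_def transport_monoid_def d_def)
  moreover have "continuous_map ?V ?V (\<lambda>a. inv\<^bsub>?M\<^esub> a)"
    using continuous_map_compose[OF continuous_map_group_inv[OF TG dcont] econt]
    by (rule continuous_map_eq) (simp add: tsV M(4))
  ultimately show "compact_group ?M ?V"
    using M(1) tsV by (simp add: compact_group_def topological_group_def transport_monoid_def)
qed

section \<open>Wreath products\<close>

text \<open>Permutations are kept extensional, so that they are determined by their values on \<open>R\<close>.\<close>

definition perms :: "'r set \<Rightarrow> ('r \<Rightarrow> 'r) set" where
  "perms R = {s \<in> R \<rightarrow>\<^sub>E R. bij_betw s R R}"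

definition wreath :: "'r set \<Rightarrow> ('l, 'z) monoid_scheme \<Rightarrow> (('r \<Rightarrow> 'r) \<times> ('r \<Rightarrow> 'l)) monoid" where
  "wreath R L = \<lparr>carrier = perms R \<times> (R \<rightarrow>\<^sub>E carrier L),
     mult = (\<lambda>x y. (restrict (fst x \<circ> fst y) R, restrict (\<lambda>C. snd x (fst y C) \<otimes>\<^bsub>L\<^esub> snd y C) R)),
     one = (restrict id R, restrict (\<lambda>C. \<one>\<^bsub>L\<^esub>) R)\<rparr>"

definition wreath_inv ::
  "'r set \<Rightarrow> ('l, 'z) monoid_scheme \<Rightarrow> ('r \<Rightarrow> 'r) \<times> ('r \<Rightarrow> 'l) \<Rightarrow> ('r \<Rightarrow> 'r) \<times> ('r \<Rightarrow> 'l)" where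
  "wreath_inv R L x = (restrict (inv_into R (fst x)) R,
      restrict (\<lambda>C. inv\<^bsub>L\<^esub> (snd x (inv_into R (fst x) C))) R)"

definition wreath_topology :: "'r set \<Rightarrow> 'l topology \<Rightarrow> (('r \<Rightarrow> 'r) \<times> ('r \<Rightarrow> 'l)) topology" where
  "wreath_topology R U = prod_topology (discrete_topology (perms R)) (product_topology (\<lambda>_. U) R)"

lemma carrier_wreath: "carrier (wreath R L) = perms R \<times> (R \<rightarrow>\<^sub>E carrier L)"
  and mult_wreath: "x \<otimes>\<^bsub>wreath R L\<^esub> y =
    (restrict (fst x \<circ> fst y) R, restrict (\<lambda>C. snd x (fst y C) \<otimes>\<^bsub>L\<^esub> snd y C) R)"
  and one_wreath: "\<one>\<^bsub>wreath R L\<^esub> = (restrict id R, restrict (\<lambda>C. \<one>\<^bsub>L\<^esub>) R)"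
  by (simp_all add: wreath_def)

lemma topspace_wreath_topology: "topspace (wreath_topology R U) = perms R \<times> (R \<rightarrow>\<^sub>E topspace U)"
  by (simp add: wreath_topology_def)

lemma perms_mem: "s \<in> perms R \<Longrightarrow> C \<in> R \<Longrightarrow> s C \<in> R"
  by (auto simp: perms_def)

lemma perms_bij_betw: "s \<in> perms R \<Longrightarrow> bij_betw s R R"
  by (simp add: perms_def)

lemma restrict_in_perms: "bij_betw s R R \<Longrightarrow> restrict s R \<in> perms R"
  by (auto simp: perms_def bij_betw_def inj_on_def)

lemma perms_comp: "s \<in> perms R \<Longrightarrow> t \<in> perms R \<Longrightarrow> restrict (s \<circ> t) R \<in> perms R"
  by (intro restrict_in_perms bij_betw_trans[of t R R s] perms_bij_betw)

lemma perms_id: "restrict id R \<in> perms R"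
  by (intro restrict_in_perms bij_betw_id)

lemma perms_inv_into: "s \<in> perms R \<Longrightarrow> restrict (inv_into R s) R \<in> perms R"
  by (intro restrict_in_perms bij_betw_inv_into perms_bij_betw)

lemma finite_perms: "finite R \<Longrightarrow> finite (perms R)"
  by (rule finite_subset[of _ "R \<rightarrow>\<^sub>E R"]) (auto simp: perms_def intro: finite_PiE)

lemma wreath_inv_closed:
  assumes "group L" and x: "x \<in> carrier (wreath R L)"
  shows "wreath_inv R L x \<in> carrier (wreath R L)"
  using x perms_inv_into[of "fst x" R] group.inv_closed[OF assms(1)]
    perms_mem[OF perms_inv_into[of "fst x" R]]
  by (auto simp: carrier_wreath wreath_inv_def PiE_def Pi_def)

lemma wreath_inv_mult:
  assumes "group L" and x: "x \<in> carrier (wreath R L)"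
  shows "wreath_inv R L x \<otimes>\<^bsub>wreath R L\<^esub> x = \<one>\<^bsub>wreath R L\<^esub>"
proof -
  have s: "fst x \<in> perms R" and f: "snd x \<in> R \<rightarrow>\<^sub>E carrier L"
    using x by (auto simp: carrier_wreath)
  have inv_s: "inv_into R (fst x) (fst x C) = C" if "C \<in> R" for C
    using bij_betw_inv_into_left[OF perms_bij_betw[OF s] that] .
  show ?thesis
    unfolding mult_wreath one_wreath wreath_inv_def
    using perms_mem[OF s] PiE_mem[OF f] inv_s group.l_inv[OF assms(1)]
    by (auto intro!: restrict_ext)
qed

lemma group_wreath:
  assumes gL: "group L"
  shows "group (wreath R L)"
proof -
  interpret L: group L by (fact gL)
  show ?thesis
  proof (rule groupI)
    fix x y assume "x \<in> carrier (wreath R L)" "y \<in> carrier (wreath R L)"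
    then have x: "fst x \<in> perms R" "snd x \<in> R \<rightarrow>\<^sub>E carrier L"
      and y: "fst y \<in> perms R" "snd y \<in> R \<rightarrow>\<^sub>E carrier L"
      by (auto simp: carrier_wreath)
    have "restrict (\<lambda>C. snd x (fst y C) \<otimes>\<^bsub>L\<^esub> snd y C) R \<in> R \<rightarrow>\<^sub>E carrier L"
      using PiE_mem[OF x(2) perms_mem[OF y(1)]] PiE_mem[OF y(2)] by simp
    then show "x \<otimes>\<^bsub>wreath R L\<^esub> y \<in> carrier (wreath R L)"
      unfolding carrier_wreath mult_wreath using perms_comp[OF x(1) y(1)] by simp
  next
    show "\<one>\<^bsub>wreath R L\<^esub> \<in> carrier (wreath R L)"
      using perms_id L.one_closed by (simp add: carrier_wreath one_wreath)
  next
    fix x y z assume "x \<in> carrier (wreath R L)" "y \<in> carrier (wreath R L)" "z \<in> carrier (wreath R L)"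
    then have x: "snd x \<in> R \<rightarrow>\<^sub>E carrier L" and y: "fst y \<in> perms R" "snd y \<in> R \<rightarrow>\<^sub>E carrier L"
      and z: "fst z \<in> perms R" "snd z \<in> R \<rightarrow>\<^sub>E carrier L"
      by (auto simp: carrier_wreath)
    show "x \<otimes>\<^bsub>wreath R L\<^esub> y \<otimes>\<^bsub>wreath R L\<^esub> z = x \<otimes>\<^bsub>wreath R L\<^esub> (y \<otimes>\<^bsub>wreath R L\<^esub> z)"
      unfolding mult_wreath fst_conv snd_conv prod.inject
      using perms_mem[OF z(1)] perms_mem[OF y(1)] PiE_mem[OF x] PiE_mem[OF y(2)] PiE_mem[OF z(2)]
      by (intro conjI restrict_ext) (simp_all add: L.m_assoc)
  next
    fix x assume x: "x \<in> carrier (wreath R L)"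
    then have s: "fst x \<in> perms R" "fst x \<in> extensional R"
      and f: "snd x \<in> R \<rightarrow>\<^sub>E carrier L" "snd x \<in> extensional R"
      by (auto simp: carrier_wreath perms_def PiE_iff)
    have "\<one>\<^bsub>wreath R L\<^esub> \<otimes>\<^bsub>wreath R L\<^esub> x = (restrict (fst x) R, restrict (snd x) R)"
      unfolding mult_wreath one_wreath fst_conv snd_conv prod.inject
      using perms_mem[OF s(1)] PiE_mem[OF f(1)] L.l_one
      by (intro conjI restrict_ext) simp_all
    then show "\<one>\<^bsub>wreath R L\<^esub> \<otimes>\<^bsub>wreath R L\<^esub> x = x"
      using s(2) f(2) by (simp add: extensional_restrict)
    show "\<exists>y\<in>carrier (wreath R L). y \<otimes>\<^bsub>wreath R L\<^esub> x = \<one>\<^bsub>wreath R L\<^esub>"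
      using wreath_inv_closed[OF gL x] wreath_inv_mult[OF gL x] by blast
  qed
qed

lemma inv_wreath:
  assumes "group L" "x \<in> carrier (wreath R L)"
  shows "inv\<^bsub>wreath R L\<^esub> x = wreath_inv R L x"
  using group.inv_equality[OF group_wreath] wreath_inv_mult wreath_inv_closed assms by blast

lemma continuous_map_locally_constant_cases:
  assumes "\<And>x. x \<in> topspace X \<Longrightarrow> openin X {y \<in> topspace X. k y = k x}"
    and "\<And>x. x \<in> topspace X \<Longrightarrow> continuous_map (subtopology X {y \<in> topspace X. k y = k x}) Y f"
  shows "continuous_map X Y f"
  by (rule pasting_lemma[where I = "k ` topspace X" and T = "\<lambda>d. {x \<in> topspace X. k x = d}"
        and f = "\<lambda>_. f"]) (use assms in auto)

lemma fibre_eq_discrete_topology: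
  assumes "continuous_map X (discrete_topology D) k"
  shows "{x \<in> topspace X. k x = d} = {x \<in> topspace X. k x \<in> {d} \<inter> D}"
  using continuous_map_funspace[OF assms] by auto

lemma openin_fibre_discrete_topology:
  assumes "continuous_map X (discrete_topology D) k"
  shows "openin X {x \<in> topspace X. k x = d}"
proof -
  have "openin X {x \<in> topspace X. k x \<in> {d} \<inter> D}"
    by (rule openin_continuous_map_preimage[OF assms]) simp
  then show ?thesis by (simp only: fibre_eq_discrete_topology[OF assms])
qed

lemma closedin_fibre_discrete_topology:
  assumes "continuous_map X (discrete_topology D) k"
  shows "closedin X {x \<in> topspace X. k x = d}"
proof -
  have "closedin X {x \<in> topspace X. k x \<in> {d} \<inter> D}"
    by (rule closedin_continuous_map_preimage[OF assms]) simp
  then show ?thesis by (simp only: fibre_eq_discrete_topology[OF assms])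
qed

lemma continuous_map_restrict_product:
  assumes "\<And>C. C \<in> R \<Longrightarrow> continuous_map Z U (\<lambda>p. h p C)"
  shows "continuous_map Z (product_topology (\<lambda>_. U) R) (\<lambda>p. restrict (h p) R)"
  unfolding continuous_map_componentwise
  using assms by (auto intro: continuous_map_eq)

lemma continuous_map_wreath_topologyI:
  "continuous_map Z (discrete_topology (perms R)) f \<Longrightarrow> continuous_map Z (product_topology (\<lambda>_. U) R) g
   \<Longrightarrow> continuous_map Z (wreath_topology R U) (\<lambda>x. (f x, g x))"
  unfolding wreath_topology_def by (rule continuous_map_pairedI)

lemma continuous_map_wreath_topology_fst:
  "continuous_map (wreath_topology R U) (discrete_topology (perms R)) fst"
  and continuous_map_wreath_topology_snd:
  "continuous_map (wreath_topology R U) (product_topology (\<lambda>_. U) R) snd"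
  unfolding wreath_topology_def by (rule continuous_map_fst continuous_map_snd)+

lemma continuous_map_wreath_topology_eval:
  "C \<in> R \<Longrightarrow> continuous_map (wreath_topology R U) U (\<lambda>x. snd x C)"
  using continuous_map_compose[OF continuous_map_wreath_topology_snd
      continuous_map_product_projection[of C R "\<lambda>_. U"]]
  by (simp add: o_def)

text \<open>On the fibres of the discrete permutation components, multiplication and inversion of the
  wreath product only involve finitely many continuous operations of \<open>L\<close>.\<close>

lemma continuous_map_wreath_mult:
  assumes TG: "topological_group L U"
  shows "continuous_map (prod_topology (wreath_topology R U) (wreath_topology R U)) (wreath_topology R U)
    (\<lambda>p. fst p \<otimes>\<^bsub>wreath R L\<^esub> snd p)"
proof -
  let ?W = "wreath R L" and ?WT = "wreath_topology R U"
  let ?X = "prod_topology ?WT ?WT"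
  note cev = continuous_map_wreath_topology_eval
  have cfst1: "continuous_map ?X (discrete_topology (perms R)) (\<lambda>p. fst (fst p))"
    and cfst2: "continuous_map ?X (discrete_topology (perms R)) (\<lambda>p. fst (snd p))"
    using continuous_map_compose[OF continuous_map_fst continuous_map_wreath_topology_fst]
      continuous_map_compose[OF continuous_map_snd continuous_map_wreath_topology_fst]
    by (simp_all add: o_def)
  show ?thesis
  proof (rule continuous_map_locally_constant_cases[where k = "\<lambda>p. (fst (fst p), fst (snd p))"])
    fix p0
    have "{p \<in> topspace ?X. (fst (fst p), fst (snd p)) = (fst (fst p0), fst (snd p0))}
        = {p \<in> topspace ?X. fst (fst p) = fst (fst p0)} \<inter> {p \<in> topspace ?X. fst (snd p) = fst (snd p0)}"
      by auto
    then show "openin ?X {p \<in> topspace ?X. (fst (fst p), fst (snd p)) = (fst (fst p0), fst (snd p0))}"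
      using openin_fibre_discrete_topology[OF cfst1] openin_fibre_discrete_topology[OF cfst2]
      by (simp add: openin_Int)
  next
    fix p assume "p \<in> topspace ?X"
    then have s: "fst (fst p) \<in> perms R" and t: "fst (snd p) \<in> perms R"
      by (auto simp: topspace_wreath_topology)
    have "continuous_map ?X ?WT (\<lambda>q. (restrict (fst (fst p) \<circ> fst (snd p)) R,
        restrict (\<lambda>C. snd (fst q) (fst (snd p) C) \<otimes>\<^bsub>L\<^esub> snd (snd q) C) R))"
    proof (intro continuous_map_wreath_topologyI continuous_map_restrict_product)
      show "continuous_map ?X (discrete_topology (perms R)) (\<lambda>q. restrict (fst (fst p) \<circ> fst (snd p)) R)"
        using perms_comp[OF s t] by simp
    next
      fix C assume C: "C \<in> R"
      show "continuous_map ?X U (\<lambda>q. snd (fst q) (fst (snd p) C) \<otimes>\<^bsub>L\<^esub> snd (snd q) C)"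
        by (rule continuous_map_group_mult[OF TG
              continuous_map_compose[OF continuous_map_fst cev[OF perms_mem[OF t C]], unfolded o_def]
              continuous_map_compose[OF continuous_map_snd cev[OF C], unfolded o_def]])
    qed
    then show "continuous_map (subtopology ?X {q \<in> topspace ?X. (fst (fst q), fst (snd q)) = (fst (fst p), fst (snd p))})
        ?WT (\<lambda>q. fst q \<otimes>\<^bsub>?W\<^esub> snd q)"
      by (rule continuous_map_eq[OF continuous_map_from_subtopology]) (simp add: mult_wreath)
  qed
qed

lemma continuous_map_wreath_inv:
  assumes TG: "topological_group L U"
  shows "continuous_map (wreath_topology R U) (wreath_topology R U) (\<lambda>x. inv\<^bsub>wreath R L\<^esub> x)"
proof -
  let ?W = "wreath R L" and ?WT = "wreath_topology R U"
  note cev = continuous_map_wreath_topology_eval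
  have gL: "group L" by (rule topological_group_group[OF TG])
  have tsW: "topspace ?WT = carrier ?W"
    by (simp add: topspace_wreath_topology carrier_wreath topological_group_topspace[OF TG])
  show ?thesis
  proof (rule continuous_map_locally_constant_cases[where k = fst])
    show "openin ?WT {q \<in> topspace ?WT. fst q = fst p}" for p
      by (rule openin_fibre_discrete_topology[OF continuous_map_wreath_topology_fst])
  next
    fix p assume "p \<in> topspace ?WT"
    then have s: "fst p \<in> perms R" by (auto simp: topspace_wreath_topology)
    have "continuous_map ?WT ?WT
        (\<lambda>q. (restrict (inv_into R (fst p)) R, restrict (\<lambda>C. inv\<^bsub>L\<^esub> (snd q (inv_into R (fst p) C))) R))"
    proof (intro continuous_map_wreath_topologyI continuous_map_restrict_product)
      show "continuous_map ?WT (discrete_topology (perms R)) (\<lambda>q. restrict (inv_into R (fst p)) R)"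
        using perms_inv_into[OF s] by simp
    next
      fix C assume C: "C \<in> R"
      have "inv_into R (fst p) C \<in> R"
        using perms_mem[OF perms_inv_into[OF s] C] C by simp
      then show "continuous_map ?WT U (\<lambda>q. inv\<^bsub>L\<^esub> (snd q (inv_into R (fst p) C)))"
        by (rule continuous_map_group_inv[OF TG cev])
    qed
    then show "continuous_map (subtopology ?WT {q \<in> topspace ?WT. fst q = fst p}) ?WT (\<lambda>x. inv\<^bsub>?W\<^esub> x)"
      by (rule continuous_map_eq[OF continuous_map_from_subtopology])
        (simp add: inv_wreath[OF gL] tsW wreath_inv_def)
  qed
qed

lemma compact_group_wreath:
  assumes CG: "compact_group L U" and fin: "finite R"
  shows "compact_group (wreath R L) (wreath_topology R U)"
proof -
  have TG: "topological_group L U" using CG by (simp add: compact_group_def)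
  have "compact_space (wreath_topology R U)" "Hausdorff_space (wreath_topology R U)"
    using CG finite_perms[OF fin]
    by (simp_all add: wreath_topology_def compact_group_def compact_space_discrete_topology
        compact_space_prod_topology compact_space_product_topology
        Hausdorff_space_prod_topology Hausdorff_space_product_topology)
  then show ?thesis
    unfolding compact_group_def topological_group_def
    using group_wreath[OF topological_group_group[OF TG], of R] continuous_map_wreath_mult[OF TG, of R]
      continuous_map_wreath_inv[OF TG, of R] topological_group_topspace[OF TG]
    by (simp add: topspace_wreath_topology carrier_wreath)
qed

lemma hom_wreath_stabiliser_eval:
  assumes Psi: "Psi \<in> hom B (wreath R L)" and C: "C \<in> R" and KB: "K \<subseteq> carrier B"
    and stab: "\<And>k. k \<in> K \<Longrightarrow> fst (Psi k) C = C"
  shows "(\<lambda>k. snd (Psi k) C) \<in> hom (B\<lparr>carrier := K\<rparr>) L"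
proof (rule homI)
  fix k assume "k \<in> carrier (B\<lparr>carrier := K\<rparr>)"
  then have "Psi k \<in> carrier (wreath R L)" using hom_in_carrier[OF Psi] KB by auto
  then have "snd (Psi k) \<in> R \<rightarrow>\<^sub>E carrier L" by (simp add: carrier_wreath mem_Times_iff)
  then show "snd (Psi k) C \<in> carrier L" using C by auto
next
  fix k k' assume "k \<in> carrier (B\<lparr>carrier := K\<rparr>)" "k' \<in> carrier (B\<lparr>carrier := K\<rparr>)"
  then have "k \<in> carrier B" "k' \<in> carrier B" "fst (Psi k') C = C"
    using KB stab by auto
  then show "snd (Psi (k \<otimes>\<^bsub>B\<lparr>carrier := K\<rparr>\<^esub> k')) C = snd (Psi k) C \<otimes>\<^bsub>L\<^esub> snd (Psi k') C"
    using hom_mult[OF Psi] C by (simp add: mult_wreath)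
qed

section \<open>Induced representations\<close>

text \<open>Choosing \<open>\<one>\<close> as the representative of \<open>H\<close> itself makes the induced representation restrict
  to \<open>alpha\<close> on \<open>H\<close>, rather than to a conjugate of it.\<close>

definition coset_rep :: "('a, 'c) monoid_scheme \<Rightarrow> 'a set \<Rightarrow> 'a set \<Rightarrow> 'a" where
  "coset_rep G H C = (if C = H then \<one>\<^bsub>G\<^esub> else (SOME x. x \<in> C))"

context
  fixes G (structure) and H
  assumes gG: "group G" and sH: "subgroup H G"
begin

lemma coset_rep_mem: "C \<in> rcosets H \<Longrightarrow> coset_rep G H C \<in> C"
  using someI[of "\<lambda>x. x \<in> C"] group.rcos_self[OF gG _ sH] subgroup.one_closed[OF sH]
  by (auto simp: coset_rep_def RCOSETS_def)

lemma coset_rep_carrier: "C \<in> rcosets H \<Longrightarrow> coset_rep G H C \<in> carrier G"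
  using coset_rep_mem subgroup.rcosets_carrier[OF sH gG] by blast

lemma r_coset_coset_rep:
  assumes C: "C \<in> rcosets H"
  shows "H #> coset_rep G H C = C"
proof -
  obtain a where a: "a \<in> carrier G" "C = H #> a" using C by (auto simp: RCOSETS_def)
  then show ?thesis
    using coset_rep_mem[OF C] group.repr_independence[OF gG _ a(1) sH] by simp
qed

lemma r_coset_eq_iff:
  assumes "x \<in> carrier G" "y \<in> carrier G"
  shows "H #> x = H #> y \<longleftrightarrow> x \<otimes> inv y \<in> H"
  using assms subgroup.rcos_module[OF sH gG] group.repr_independence[OF gG _ _ sH]
    group.rcos_self[OF gG _ sH] by metis

lemma r_coset_in_rcosets: "C \<in> rcosets H \<Longrightarrow> g \<in> carrier G \<Longrightarrow> C #> g \<in> rcosets H"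
  using group.coset_mult_assoc[OF gG subgroup.subset[OF sH]] group.rcosetsI[OF gG subgroup.subset[OF sH]]
    monoid.m_closed[OF group.is_monoid[OF gG]]
  by (auto simp: RCOSETS_def)

lemma r_coset_mult_assoc: "C \<in> rcosets H \<Longrightarrow> g \<in> carrier G \<Longrightarrow> h \<in> carrier G \<Longrightarrow> (C #> g) #> h = C #> (g \<otimes> h)"
  by (rule group.coset_mult_assoc[OF gG subgroup.rcosets_carrier[OF sH gG]])

lemma coset_rep_cocycle:
  assumes C: "C \<in> rcosets H" and g: "g \<in> carrier G"
  shows "coset_rep G H (C #> inv g) \<otimes> g \<otimes> inv (coset_rep G H C) \<in> H"
proof -
  interpret group G by (fact gG)
  let ?t = "coset_rep G H"
  have D: "C #> inv g \<in> rcosets H" by (rule r_coset_in_rcosets[OF C inv_closed[OF g]])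
  have tC: "?t C \<in> carrier G" and tD: "?t (C #> inv g) \<in> carrier G"
    using coset_rep_carrier C D by auto
  have "H #> ?t (C #> inv g) = H #> (?t C \<otimes> inv g)"
    using r_coset_coset_rep[OF D] r_coset_coset_rep[OF C]
      coset_mult_assoc[OF subgroup.subset[OF sH] tC inv_closed[OF g]] by simp
  then have "?t (C #> inv g) \<otimes> inv (?t C \<otimes> inv g) \<in> H"
    using r_coset_eq_iff tD tC g by blast
  then show ?thesis
    using tD tC g by (simp add: inv_mult_group m_assoc)
qed

lemma r_coset_translate_perms:
  assumes g: "g \<in> carrier G"
  shows "restrict (\<lambda>C. C #> inv g) (rcosets H) \<in> perms (rcosets H)"
proof (rule restrict_in_perms, rule bij_betw_byWitness[where f' = "\<lambda>C. C #> g"])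
  interpret group G by (fact gG)
  show "\<forall>C\<in>rcosets H. C #> inv g #> g = C" "\<forall>C\<in>rcosets H. C #> g #> inv g = C"
    using r_coset_mult_assoc g coset_mult_one[OF subgroup.rcosets_carrier[OF sH gG]] by auto
  show "(\<lambda>C. C #> inv g) ` (rcosets H) \<subseteq> rcosets H" "(\<lambda>C. C #> g) ` (rcosets H) \<subseteq> rcosets H"
    using r_coset_in_rcosets g by auto
qed

end

text \<open>The induced representation of \<open>alpha\<close>, with values in the wreath product over the right
  cosets: \<open>g\<close> acts on the cosets from the right (hence by \<open>inv g\<close>), and the cocycle records the
  \<open>H\<close>-parts.\<close>

definition induced_rep ::
  "('a, 'c) monoid_scheme \<Rightarrow> 'a set \<Rightarrow> ('a \<Rightarrow> 'l) \<Rightarrow> 'a \<Rightarrow> ('a set \<Rightarrow> 'a set) \<times> ('a set \<Rightarrow> 'l)" where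
  "induced_rep G H alpha g =
     (restrict (\<lambda>C. C #>\<^bsub>G\<^esub> inv\<^bsub>G\<^esub> g) (rcosets\<^bsub>G\<^esub> H),
      restrict (\<lambda>C. alpha (coset_rep G H (C #>\<^bsub>G\<^esub> inv\<^bsub>G\<^esub> g) \<otimes>\<^bsub>G\<^esub> g \<otimes>\<^bsub>G\<^esub> inv\<^bsub>G\<^esub> coset_rep G H C))
        (rcosets\<^bsub>G\<^esub> H))"

lemma induced_rep_subgroup:
  fixes G (structure)
  assumes gG: "group G" and sH: "subgroup H G" and h: "h \<in> H"
  shows "fst (induced_rep G H alpha h) H = H" "snd (induced_rep G H alpha h) H = alpha h"
proof -
  interpret group G by (fact gG)
  have "H #> inv h = H" by (rule subgroup.rcos_const[OF sH gG subgroup.m_inv_closed[OF sH h]])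
  then show "fst (induced_rep G H alpha h) H = H" "snd (induced_rep G H alpha h) H = alpha h"
    using subgroup.subgroup_in_rcosets[OF sH gG] subgroup.mem_carrier[OF sH h]
    by (simp_all add: induced_rep_def coset_rep_def)
qed

lemma induced_rep_hom:
  fixes G (structure)
  assumes gG: "group G" and sH: "subgroup H G" and "group L"
    and ah: "alpha \<in> hom (G\<lparr>carrier := H\<rparr>) L"
  shows "induced_rep G H alpha \<in> hom G (wreath (rcosets H) L)"
proof (rule homI)
  interpret group G by (fact gG)
  let ?R = "rcosets H" and ?t = "coset_rep G H"
  have aH: "alpha x \<in> carrier L" if "x \<in> H" for x
    using hom_in_carrier[OF ah, of x] that by simp
  have aM: "alpha (x \<otimes> y) = alpha x \<otimes>\<^bsub>L\<^esub> alpha y" if "x \<in> H" "y \<in> H" for x y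
    using hom_mult[OF ah, of x y] that by simp
  fix g assume g: "g \<in> carrier G"
  show "induced_rep G H alpha g \<in> carrier (wreath ?R L)"
    using r_coset_translate_perms[OF gG sH g] aH[OF coset_rep_cocycle[OF gG sH _ g]]
    by (simp add: induced_rep_def carrier_wreath)
  fix g' assume g': "g' \<in> carrier G"
  have e1: "C #> inv (g \<otimes> g') = C #> inv g' #> inv g" if "C \<in> ?R" for C
    using r_coset_mult_assoc[OF gG sH that] g g' by (simp add: inv_mult_group)
  have e2: "alpha (?t (C #> inv (g \<otimes> g')) \<otimes> (g \<otimes> g') \<otimes> inv (?t C))
      = alpha (?t (C #> inv g' #> inv g) \<otimes> g \<otimes> inv (?t (C #> inv g')))
        \<otimes>\<^bsub>L\<^esub> alpha (?t (C #> inv g') \<otimes> g' \<otimes> inv (?t C))" if C: "C \<in> ?R" for C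
  proof -
    have C': "C #> inv g' \<in> ?R" by (rule r_coset_in_rcosets[OF gG sH C inv_closed[OF g']])
    define a b c where "a = ?t (C #> inv g' #> inv g)" and "b = ?t (C #> inv g')" and "c = ?t C"
    have abc: "a \<in> carrier G" "b \<in> carrier G" "c \<in> carrier G"
      unfolding a_def b_def c_def
      using coset_rep_carrier[OF gG sH] r_coset_in_rcosets[OF gG sH C' inv_closed[OF g]] C' C by auto
    have "inv b \<otimes> (b \<otimes> (g' \<otimes> inv c)) = g' \<otimes> inv c"
      using abc g' by (simp add: m_assoc[symmetric])
    then have "(a \<otimes> g \<otimes> inv b) \<otimes> (b \<otimes> g' \<otimes> inv c) = a \<otimes> (g \<otimes> g') \<otimes> inv c"
      using abc g g' by (simp add: m_assoc)
    then show ?thesis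
      using aM[OF coset_rep_cocycle[OF gG sH C' g] coset_rep_cocycle[OF gG sH C g']] e1[OF C]
      by (simp add: a_def b_def c_def)
  qed
  show "induced_rep G H alpha (g \<otimes> g') = induced_rep G H alpha g \<otimes>\<^bsub>wreath ?R L\<^esub> induced_rep G H alpha g'"
    unfolding induced_rep_def mult_wreath fst_conv snd_conv prod.inject
    using e1 e2 r_coset_in_rcosets[OF gG sH _ inv_closed[OF g']]
    by (intro conjI restrict_ext) simp_all
qed

lemma openin_r_coset_translate_fibre:
  fixes G (structure)
  assumes TG: "topological_group G T" and sH: "subgroup H G" and oH: "openin T H"
    and C: "C \<in> rcosets H" and g0: "g0 \<in> topspace T"
  shows "openin T {g \<in> topspace T. C #> inv g = C #> inv g0}"
proof -
  interpret group G using topological_group_group[OF TG] .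
  have tsT: "topspace T = carrier G" by (rule topological_group_topspace[OF TG])
  let ?c = "coset_rep G H C"
  have c: "?c \<in> carrier G" by (rule coset_rep_carrier[OF is_group sH C])
  have cos: "C #> inv g = H #> (?c \<otimes> inv g)" if "g \<in> carrier G" for g
    using r_coset_coset_rep[OF is_group sH C] coset_mult_assoc[OF subgroup.subset[OF sH] c] that
    by (metis inv_closed)
  have "C #> inv g = C #> inv g0 \<longleftrightarrow> ?c \<otimes> inv g \<otimes> inv (?c \<otimes> inv g0) \<in> H"
    if "g \<in> carrier G" for g
    using cos[OF that] cos g0 r_coset_eq_iff[OF is_group sH] c that by (simp add: tsT)
  then have "{g \<in> topspace T. C #> inv g = C #> inv g0}
      = {g \<in> topspace T. ?c \<otimes> inv g \<otimes> inv (?c \<otimes> inv g0) \<in> H}"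
    by (auto simp: tsT)
  moreover have "continuous_map T T (\<lambda>g. ?c \<otimes> inv g \<otimes> inv (?c \<otimes> inv g0))"
    using c g0 by (intro continuous_map_group_mult[OF TG] continuous_map_group_inv[OF TG]
        continuous_map_id[unfolded id_def]) (auto simp: tsT)
  ultimately show ?thesis
    using openin_continuous_map_preimage[OF _ oH] by simp
qed

lemma openin_induced_rep_fibre:
  fixes G (structure)
  assumes TG: "topological_group G T" and sH: "subgroup H G" and oH: "openin T H"
    and fin: "finite (rcosets H)" and g0: "g0 \<in> topspace T"
  shows "openin T {g \<in> topspace T. fst (induced_rep G H alpha g) = fst (induced_rep G H alpha g0)}"
proof -
  have "{g \<in> topspace T. fst (induced_rep G H alpha g) = fst (induced_rep G H alpha g0)}
      = (\<Inter>C\<in>rcosets H. {g \<in> topspace T. C #> inv g = C #> inv g0}) \<inter> topspace T"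
    by (auto simp: induced_rep_def fun_eq_iff restrict_def split: if_splits)
  then show ?thesis
    using fin openin_r_coset_translate_fibre[OF TG sH oH _ g0] by (simp add: openin_INT)
qed

lemma continuous_map_induced_rep:
  fixes G (structure)
  assumes TG: "topological_group G T" and sH: "subgroup H G" and oH: "openin T H"
    and fin: "finite (rcosets H)" and ac: "continuous_map (subtopology T H) U alpha"
  shows "continuous_map T (wreath_topology (rcosets H) U) (induced_rep G H alpha)"
proof (rule continuous_map_locally_constant_cases[where k = "\<lambda>g. fst (induced_rep G H alpha g)"])
  interpret group G using topological_group_group[OF TG] .
  have tsT: "topspace T = carrier G" by (rule topological_group_topspace[OF TG])
  let ?R = "rcosets H" and ?t = "coset_rep G H"
  fix g0 assume g0: "g0 \<in> topspace T"
  let ?F = "{g \<in> topspace T. fst (induced_rep G H alpha g) = fst (induced_rep G H alpha g0)}"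
  show "openin T ?F" by (rule openin_induced_rep_fibre[OF TG sH oH fin g0])
  let ?s = "fst (induced_rep G H alpha g0)"
  have s: "?s \<in> perms ?R"
    using r_coset_translate_perms[OF is_group sH] g0 by (simp add: induced_rep_def tsT)
  have s_F: "C #> inv g = C #> inv g0" if "g \<in> ?F" "C \<in> ?R" for g C
    using that by (simp add: induced_rep_def) (metis restrict_apply')
  have in_H: "?t (?s C) \<otimes> g \<otimes> inv (?t C) \<in> H" if "g \<in> ?F" "C \<in> ?R" for g C
    using coset_rep_cocycle[OF is_group sH that(2), of g] that
    by (simp add: tsT induced_rep_def s_F[OF that])
  have "continuous_map (subtopology T ?F) (wreath_topology ?R U)
      (\<lambda>g. (?s, restrict (\<lambda>C. alpha (?t (?s C) \<otimes> g \<otimes> inv (?t C))) ?R))"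
  proof (intro continuous_map_wreath_topologyI continuous_map_restrict_product)
    show "continuous_map (subtopology T ?F) (discrete_topology (perms ?R)) (\<lambda>g. ?s)"
      using s by simp
  next
    fix C assume C: "C \<in> ?R"
    have "continuous_map T T (\<lambda>g. ?t (?s C) \<otimes> g \<otimes> inv (?t C))"
      using coset_rep_carrier[OF is_group sH] perms_mem[OF s C] C
      by (intro continuous_map_group_translate[OF TG]) auto
    then have "continuous_map (subtopology T ?F) (subtopology T H) (\<lambda>g. ?t (?s C) \<otimes> g \<otimes> inv (?t C))"
      unfolding continuous_map_in_subtopology using in_H[OF _ C]
      by (auto intro: continuous_map_from_subtopology)
    from continuous_map_compose[OF this ac]
    show "continuous_map (subtopology T ?F) U (\<lambda>g. alpha (?t (?s C) \<otimes> g \<otimes> inv (?t C)))"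
      by (simp add: o_def)
  qed
  then show "continuous_map (subtopology T ?F) (wreath_topology ?R U) (induced_rep G H alpha)"
  proof (rule continuous_map_eq)
    fix g assume "g \<in> topspace (subtopology T ?F)"
    then have g: "g \<in> ?F" by simp
    have "snd (induced_rep G H alpha g) = restrict (\<lambda>C. alpha (?t (?s C) \<otimes> g \<otimes> inv (?t C))) ?R"
      unfolding induced_rep_def snd_conv by (rule restrict_ext) (simp add: s_F[OF g] induced_rep_def)
    then show "(?s, restrict (\<lambda>C. alpha (?t (?s C) \<otimes> g \<otimes> inv (?t C))) ?R) = induced_rep G H alpha g"
      using g by (metis (mono_tags, lifting) mem_Collect_eq prod.collapse)
  qed
qed

section \<open>The universal property of the Bohr compactification\<close>

text \<open>The universal property is only assumed for compact groups living in the type \<open>'a set set\<close>.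
  It holds for all compact groups nonetheless: the closure of the image of \<open>G\<close> is a compact group
  that embeds into \<open>'a set set\<close> by sending a point to the traces on \<open>G\<close> of its open neighbourhoods.\<close>

lemma bohr_compactification_factorization:
  fixes G :: "('a, 'c) monoid_scheme" and W :: "('w, 'z) monoid_scheme"
  assumes TG: "topological_group G T"
    and bohr: "bohr_compactification_wrt TYPE('a set set) G T B S beta"
    and CGW: "compact_group W WT" and Ph: "Phi \<in> hom G W" and Pc: "continuous_map T WT Phi"
  shows "\<exists>Psi. Psi \<in> hom B W \<and> continuous_map S WT Psi \<and> (\<forall>x\<in>carrier G. Psi (beta x) = Phi x)"
proof -
  interpret G: group G using topological_group_group[OF TG] .
  have TGW: "topological_group W WT" using CGW by (simp add: compact_group_def)
  interpret W: group W using topological_group_group[OF TGW] .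
  have UP: "\<And>(L :: 'a set set monoid) U alpha. compact_group L U \<Longrightarrow> alpha \<in> hom G L \<Longrightarrow>
      continuous_map T U alpha \<Longrightarrow>
      \<exists>alpha'. alpha' \<in> hom B L \<and> continuous_map S U alpha' \<and> (\<forall>x \<in> carrier G. alpha x = alpha' (beta x))"
    using bohr unfolding bohr_compactification_wrt_def by blast
  define A where "A = WT closure_of (Phi ` carrier G)"
  have "subgroup (Phi ` carrier G) W"
    by (intro group_hom.img_is_subgroup group_hom.intro group_hom_axioms.intro G.is_group W.is_group Ph)
  then have sA: "subgroup A W" unfolding A_def by (rule subgroup_closure_of[OF TGW])
  have CGA: "compact_group (W\<lparr>carrier := A\<rparr>) (subtopology WT A)"
    using compact_group_closed_subgroup[OF CGW sA] unfolding A_def by simp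
  have PA: "Phi x \<in> A" if "x \<in> carrier G" for x
    using that closure_of_subset[of "Phi ` carrier G" WT] hom_in_carrier[OF Ph]
      topological_group_topspace[OF TGW] unfolding A_def by blast
  have PhA: "Phi \<in> hom G (W\<lparr>carrier := A\<rparr>)"
    using PA hom_mult[OF Ph] by (intro homI) simp_all
  have PcA: "continuous_map T (subtopology WT A) Phi"
    unfolding continuous_map_in_subtopology using Pc PA topological_group_topspace[OF TG] by auto
  define e where "e x = {{g \<in> carrier G. Phi g \<in> V} | V. openin WT V \<and> x \<in> V}" for x
  have inj: "inj_on e (carrier (W\<lparr>carrier := A\<rparr>))"
    using inj_on_closure_of_open_traces[of WT "carrier G" Phi] CGW
    unfolding A_def e_def compact_group_def by simp
  note transport = compact_group_transport[OF CGA inj]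
  note transport_hom = group_transport_monoid[OF group.subgroup_imp_group[OF W.is_group sA] inj]
  obtain Psi' where Psi': "Psi' \<in> hom B (transport_monoid e (W\<lparr>carrier := A\<rparr>))"
      "continuous_map S (transport_topology e (W\<lparr>carrier := A\<rparr>) (subtopology WT A)) Psi'"
    and eq: "\<And>x. x \<in> carrier G \<Longrightarrow> e (Phi x) = Psi' (beta x)"
    using UP[OF transport(1) hom_compose[OF PhA transport_hom(2)]
        continuous_map_compose[OF PcA transport(2)]] by auto
  define Psi where "Psi = inv_into A e \<circ> Psi'"
  have "Psi \<in> hom B (W\<lparr>carrier := A\<rparr>)"
    unfolding Psi_def using hom_compose[OF Psi'(1) transport_hom(3)] by simp
  then have "Psi \<in> hom B W"
    using subgroup.subset[OF sA] by (auto simp: hom_def)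
  moreover have "continuous_map S WT Psi"
    unfolding Psi_def using continuous_map_compose[OF Psi'(2) transport(3)]
    by (simp add: continuous_map_into_fulltopology)
  moreover have "Psi (beta x) = Phi x" if "x \<in> carrier G" for x
    using inv_into_f_f[OF inj] PA[OF that] by (simp add: Psi_def eq[OF that, symmetric])
  ultimately show ?thesis by blast
qed

text \<open>Induce \<open>alpha\<close> up to \<open>G\<close>, extend the induced representation to \<open>B\<close>, and evaluate it at the
  coset \<open>H\<close>. This is multiplicative on the stabiliser of \<open>H\<close>, which is closed and contains the image
  of \<open>H\<close>, hence contains its closure.\<close>

lemma bohr_compactification_extend_from_subgroup:
  fixes G :: "('a, 'c) monoid_scheme" and L :: "('l, 'z) monoid_scheme"
  assumes TG: "topological_group G T" and sH: "subgroup H G" and oH: "openin T H"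
    and fin: "finite (rcosets\<^bsub>G\<^esub> H)"
    and bohr: "bohr_compactification_wrt TYPE('a set set) G T B S beta"
    and CGL: "compact_group L U" and ah: "alpha \<in> hom (G\<lparr>carrier := H\<rparr>) L"
    and ac: "continuous_map (subtopology T H) U alpha"
  obtains alpha' where "alpha' \<in> hom (B\<lparr>carrier := S closure_of (beta ` H)\<rparr>) L"
    and "continuous_map (subtopology S (S closure_of (beta ` H))) U alpha'"
    and "\<And>x. x \<in> H \<Longrightarrow> alpha x = alpha' (beta x)"
proof -
  let ?K = "S closure_of (beta ` H)" and ?R = "rcosets\<^bsub>G\<^esub> H"
  let ?W = "wreath ?R L" and ?WT = "wreath_topology ?R U"
  have gG: "group G" by (rule topological_group_group[OF TG])
  have gL: "group L" using CGL topological_group_group by (auto simp: compact_group_def)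
  have HR: "H \<in> ?R" by (rule subgroup.subgroup_in_rcosets[OF sH gG])
  have bh: "beta \<in> hom G B" and tsS: "topspace S = carrier B"
    using bohr by (auto simp: bohr_compactification_wrt_def compact_group_def topological_group_topspace)
  obtain Psi where Psi: "Psi \<in> hom B ?W" "continuous_map S ?WT Psi"
    and Psi_beta: "\<And>x. x \<in> carrier G \<Longrightarrow> Psi (beta x) = induced_rep G H alpha x"
    using bohr_compactification_factorization[OF TG bohr compact_group_wreath[OF CGL fin]
        induced_rep_hom[OF gG sH gL ah] continuous_map_induced_rep[OF TG sH oH fin ac]]
    by blast
  have csnd: "continuous_map S (product_topology (\<lambda>_. U) ?R) (\<lambda>k. snd (Psi k))"
    using continuous_map_compose[OF Psi(2) continuous_map_wreath_topology_snd] by (simp add: o_def)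
  have "continuous_map S (discrete_topology (perms ?R)) (\<lambda>k. fst (Psi k))"
    using continuous_map_compose[OF Psi(2) continuous_map_wreath_topology_fst] by (simp add: o_def)
  then have "continuous_map S (discrete_topology ?R) (\<lambda>k. fst (Psi k) H)"
    using continuous_map_compose[of S _ "\<lambda>k. fst (Psi k)" _ "\<lambda>s. s H"] perms_mem[OF _ HR]
    by (simp add: o_def)
  then have "closedin S {k \<in> topspace S. fst (Psi k) H = H}"
    by (rule closedin_fibre_discrete_topology)
  moreover have "beta h \<in> {k \<in> topspace S. fst (Psi k) H = H}" if "h \<in> H" for h
    using Psi_beta induced_rep_subgroup(1)[OF gG sH that] subgroup.mem_carrier[OF sH that]
      hom_in_carrier[OF bh] tsS by simp
  ultimately have stab: "fst (Psi k) H = H" if "k \<in> ?K" for k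
    using closure_of_minimal[of "beta ` H" _ S] that by blast
  have KB: "?K \<subseteq> carrier B"
    using closure_of_subset_topspace tsS by metis
  show ?thesis
  proof
    show "(\<lambda>k. snd (Psi k) H) \<in> hom (B\<lparr>carrier := ?K\<rparr>) L"
      by (rule hom_wreath_stabiliser_eval[OF Psi(1) HR KB stab])
    show "continuous_map (subtopology S ?K) U (\<lambda>k. snd (Psi k) H)"
      using continuous_map_compose[OF csnd continuous_map_product_projection[OF HR]]
      by (simp add: o_def continuous_map_from_subtopology)
    show "alpha x = snd (Psi (beta x)) H" if "x \<in> H" for x
      using Psi_beta induced_rep_subgroup(2)[OF gG sH that, where alpha = alpha]
        subgroup.mem_carrier[OF sH that] by simp
  qed
qed

lemma bohr_compactification_subgroup:
  fixes G :: "('a, 'c) monoid_scheme"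
  assumes TG: "topological_group G T" and sH: "subgroup H G" and oH: "openin T H"
    and fin: "finite (rcosets\<^bsub>G\<^esub> H)"
    and bohr: "bohr_compactification_wrt TYPE('a set set) G T B S beta"
  defines "K \<equiv> S closure_of (beta ` H)"
  shows "subgroup K B"
    and "bohr_compactification_wrt TYPE('m) (G\<lparr>carrier := H\<rparr>) (subtopology T H)
           (B\<lparr>carrier := K\<rparr>) (subtopology S K) beta"
proof -
  have CGB: "compact_group B S" and bh: "beta \<in> hom G B" and bc: "continuous_map T S beta"
    using bohr by (simp_all add: bohr_compactification_wrt_def)
  have TGB: "topological_group B S" using CGB by (simp add: compact_group_def)
  have "group_hom G B beta"
    using topological_group_group[OF TG] topological_group_group[OF TGB] bh
    by (intro group_hom.intro group_hom_axioms.intro)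
  then show sK: "subgroup K B"
    unfolding K_def by (intro subgroup_closure_of[OF TGB] group_hom.subgroup_img_is_subgroup[OF _ sH])
  have HK: "beta ` H \<subseteq> K"
    unfolding K_def using subgroup.mem_carrier[OF sH] hom_in_carrier[OF bh]
      topological_group_topspace[OF TGB] by (intro closure_of_subset) auto
  show "bohr_compactification_wrt TYPE('m) (G\<lparr>carrier := H\<rparr>) (subtopology T H)
      (B\<lparr>carrier := K\<rparr>) (subtopology S K) beta"
    unfolding bohr_compactification_wrt_def
  proof (intro conjI allI impI)
    show "compact_group (B\<lparr>carrier := K\<rparr>) (subtopology S K)"
      unfolding K_def by (rule compact_group_closed_subgroup[OF CGB sK[unfolded K_def] closedin_closure_of])
    show "beta \<in> hom (G\<lparr>carrier := H\<rparr>) (B\<lparr>carrier := K\<rparr>)"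
      using HK hom_mult[OF bh] subgroup.mem_carrier[OF sH] by (intro homI) auto
    show "continuous_map (subtopology T H) (subtopology S K) beta"
      using continuous_map_from_subtopology[OF bc] HK by (auto simp: continuous_map_in_subtopology)
    have "subtopology S K closure_of (beta ` H) = K \<inter> (S closure_of (K \<inter> beta ` H))"
      by (rule closure_of_subtopology)
    also have "\<dots> = K"
      using HK unfolding K_def by (simp add: Int_absorb1)
    also have "\<dots> = topspace (subtopology S K)"
      unfolding K_def by (simp add: closure_of_subset_topspace Int_absorb1)
    finally show "subtopology S K closure_of (beta ` carrier (G\<lparr>carrier := H\<rparr>)) = topspace (subtopology S K)"
      by simp
  next
    fix L :: "'m monoid" and U alpha
    assume "compact_group L U \<and> alpha \<in> hom (G\<lparr>carrier := H\<rparr>) L \<and> continuous_map (subtopology T H) U alpha"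
    then obtain alpha' where "alpha' \<in> hom (B\<lparr>carrier := K\<rparr>) L" "continuous_map (subtopology S K) U alpha'"
      "\<And>x. x \<in> H \<Longrightarrow> alpha x = alpha' (beta x)"
      using bohr_compactification_extend_from_subgroup[OF TG sH oH fin bohr, of L U alpha] unfolding K_def by blast
    then show "\<exists>alpha'. alpha' \<in> hom (B\<lparr>carrier := K\<rparr>) L \<and> continuous_map (subtopology S K) U alpha' \<and>
        (\<forall>x\<in>carrier (G\<lparr>carrier := H\<rparr>). alpha x = alpha' (beta x))"
      by auto
  qed
qed

theorem proposition2p4:
  fixes G :: "('a, 'c) monoid_scheme" and T :: "'a topology"
    and B :: "('b, 'd) monoid_scheme" and S :: "'b topology"
    and beta :: "'a \<Rightarrow> 'b" and H :: "'a set" and K :: "'b set"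
  assumes "topological_group G T"
    and "subgroup H G" and "closedin T H" and "finite (rcosets\<^bsub>G\<^esub> H)"
    and "bohr_compactification_wrt TYPE('a set set) G T B S beta"
    and "K = S closure_of (beta ` H)"
  shows "(subgroup K B \<and> finite (rcosets\<^bsub>B\<^esub> K)) \<and>
         bohr_compactification_wrt TYPE('m) (G\<lparr>carrier := H\<rparr>) (subtopology T H)
           (B\<lparr>carrier := K\<rparr>) (subtopology S K) beta \<and>
         connected_component_of (subtopology S K) \<one>\<^bsub>B\<^esub> = connected_component_of S \<one>\<^bsub>B\<^esub>"
proof -
  note TG = assms(1) and sH = assms(2) and fin = assms(4) and bohr = assms(5) and K = assms(6)
  have oH: "openin T H" by (rule openin_closed_subgroup_finite_index[OF TG sH assms(3) fin])
  have sK: "subgroup K B"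
    and bohr_H: "bohr_compactification_wrt TYPE('m) (G\<lparr>carrier := H\<rparr>) (subtopology T H)
           (B\<lparr>carrier := K\<rparr>) (subtopology S K) beta"
    unfolding K by (rule bohr_compactification_subgroup[OF TG sH oH fin bohr])+
  have TGB: "topological_group B S" and bh: "beta \<in> hom G B"
    and dense: "S closure_of (beta ` carrier G) = topspace S"
    using bohr by (simp_all add: bohr_compactification_wrt_def compact_group_def)
  have cK: "closedin S K" unfolding K by simp
  have "beta ` H \<subseteq> K"
    using bohr_H by (auto simp: bohr_compactification_wrt_def hom_def)
  then have finK: "finite (rcosets\<^bsub>B\<^esub> K)"
    by (rule finite_rcosets_dense_image[OF topological_group_group[OF TG] TGB bh dense sH fin sK cK])
  have "connected_component_of (subtopology S K) \<one>\<^bsub>B\<^esub> = connected_component_of S \<one>\<^bsub>B\<^esub>"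
    using openin_closed_subgroup_finite_index[OF TGB sK cK finK] cK subgroup.one_closed[OF sK]
    by (rule connected_component_of_clopen_subtopology)
  with sK finK bohr_H show ?thesis by blast
qed

end
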